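(* Assume $m\le n$. Then $\mathcal{T}_I(\mathbf{x})\ne\emptyset$ for every Generalized Nash equilibrium $\mathbf{x}$ of $G^{(2)}$.
   Context: $G^{(2)}$ is a Fragile multi-CPR Game with $n\ge1$ players and $m\ge1$ CPRs: $[k]=\{1,\dots,k\}$, $C_m=\{(x_1,\dots,x_m)\in[0,1]^m:\sum_j x_j\le1\}$, $\mathcal{C}_n=\prod_{i\in[n]}C_m$, $\mathcal{C}_{-i}=\prod_{[n]\setminus\{i\}}C_m$. A profile is $\mathbf{x}=(\mathbf{x}_1,\dots,\mathbf{x}_n)$, $\mathbf{x}_i=(x_{i1},\dots,x_{im})$; write $\mathbf{x}=(\mathbf{x}_i,\mathbf{x}_{-i})$; $\mathbf{x}_T^{(j)}=\sum_i x_{ij}$, $\mathbf{x}_T^{j|i}=\sum_{\ell\ne i}x_{\ell j}$. Each CPR $j$ has return rate $\mathcal{R}_j(t)>1$ and failure probability $p_j(t)\in[0,1]$; each player $i$ has parameters $a_i,k_i$. $\mathcal{F}_{ij}(t)=(\mathcal{R}_j(t)-1)^{a_i}(1-p_j(t))-k_ip_j(t)$; utility $\mathcal{V}_i(\mathbf{x}_i;\mathbf{x}_{-i})=\sum_j x_{ij}^{a_i}\mathcal{F}_{ij}(\mathbf{x}_T^{(j)})$. Assumption: (1) $p_j(0)=0$, $p_j(t)=1$ for $t\ge1$; (2) $a_i\in(0,1]$, $k_i>0$; (3) each $\mathcal{F}_{ij}$ (continuous on $[0,1]$) has strictly negative first and second derivatives on $(0,1)$. $\omega_{ij}\in(0,1)$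 is the unique zero of $\mathcal{F}_{ij}$ in $(0,1)$. $A(\mathbf{x}_{-i})=\{j:\mathbf{x}_T^{j|i}<\omega_{ij}\}$. $\vartheta_i(\mathbf{x}_{-i})=C_m\cap\big(\prod_{j\in A(\mathbf{x}_{-i})}[0,\omega_{ij}-\mathbf{x}_T^{j|i}]\times\prod_{j\notin A(\mathbf{x}_{-i})}\{0\}\big)$. A Generalized Nash equilibrium is $\mathbf{x}\in\mathcal{C}_n$ with, for all $i$, $\mathbf{x}_i\in\vartheta_i(\mathbf{x}_{-i})$ and $\mathcal{V}_i(\mathbf{x}_i;\mathbf{x}_{-i})\ge\mathcal{V}_i(\mathbf{z};\mathbf{x}_{-i})$ for all $\mathbf{z}\in\vartheta_i(\mathbf{x}_{-i})$. $\psi_{ij}(x;s)=x\,\mathcal{F}_{ij}'(x+s)+a_i\mathcal{F}_{ij}(x+s)$. For a GNE $\mathbf{x}$: $J_{\mathbf{x}_{-i}}=\{j\in A(\mathbf{x}_{-i}):x_{ij}\ne0\}$; $\mathbf{x}_i$ is of Type I if $\sum_{j\in J_{\mathbf{x}_{-i}}}x_{ij}<1$ and $\psi_{ij}(x_{ij};\mathbf{x}_T^{j|i})=0$ for all $j\in J_{\mathbf{x}_{-i}}$; of Type II if $\sum_{j\in J_{\mathbf{x}_{-i}}}x_{ij}=1$ and there is $\kappa_0\ge0$ with $x_{ij}^{a_i-1}\psi_{ij}(x_{ij};\mathbf{x}_T^{j|i})=\kappa_0$ for all $j\in J_{\mathbf{x}_{-i}}$. $\mathcal{T}_I(\mathbf{x})=\{i\in[n]:\mathbf{x}_i\text{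 is of Type I}\}$. *)

theory Defs
  imports "HOL-Analysis.Analysis"
begin

(* Players are indexed by {1..n}, CPRs by {1..m}.
   A strategy of a player is a function z :: nat => real (only j in {1..m} matter);
   a profile is x :: nat => nat => real, x i j = x_{ij}. *)

definition inC :: "nat \<Rightarrow> (nat \<Rightarrow> real) \<Rightarrow> bool" where
  "inC m z \<longleftrightarrow> (\<forall>j\<in>{1..m}. 0 \<le> z j \<and> z j \<le> 1) \<and> (\<Sum>j\<in>{1..m}. z j) \<le> 1"

definition inCn :: "nat \<Rightarrow> nat \<Rightarrow> (nat \<Rightarrow> nat \<Rightarrow> real) \<Rightarrow> bool" where
  "inCn n m x \<longleftrightarrow> (\<forall>i\<in>{1..n}. inC m (x i))"

definition xT :: "nat \<Rightarrow> (nat \<Rightarrow> nat \<Rightarrow> real) \<Rightarrow> nat \<Rightarrow> real" where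
  "xT n x j = (\<Sum>i\<in>{1..n}. x i j)"

definition xTex :: "nat \<Rightarrow> (nat \<Rightarrow> nat \<Rightarrow> real) \<Rightarrow> nat \<Rightarrow> nat \<Rightarrow> real" where
  "xTex n x i j = (\<Sum>l\<in>{1..n} - {i}. x l j)"

definition FF :: "(nat \<Rightarrow> real \<Rightarrow> real) \<Rightarrow> (nat \<Rightarrow> real \<Rightarrow> real) \<Rightarrow> (nat \<Rightarrow> real) \<Rightarrow> (nat \<Rightarrow> real)
                  \<Rightarrow> nat \<Rightarrow> nat \<Rightarrow> real \<Rightarrow> real" where
  "FF R p a k i j t = (R j t - 1) powr (a i) * (1 - p j t) - k i * p j t"

definition util :: "(nat \<Rightarrow> real \<Rightarrow> real) \<Rightarrow> (nat \<Rightarrow> real \<Rightarrow> real) \<Rightarrow> (nat \<Rightarrow> real) \<Rightarrow> (nat \<Rightarrow> real)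
                   \<Rightarrow> nat \<Rightarrow> nat \<Rightarrow> nat \<Rightarrow> (nat \<Rightarrow> nat \<Rightarrow> real) \<Rightarrow> real" where
  "util R p a k n m i x = (\<Sum>j\<in>{1..m}. x i j powr (a i) * FF R p a k i j (xT n x j))"

definition omega :: "(nat \<Rightarrow> real \<Rightarrow> real) \<Rightarrow> (nat \<Rightarrow> real \<Rightarrow> real) \<Rightarrow> (nat \<Rightarrow> real) \<Rightarrow> (nat \<Rightarrow> real)
                    \<Rightarrow> nat \<Rightarrow> nat \<Rightarrow> real" where
  "omega R p a k i j = (THE w. w \<in> {0<..<1} \<and> FF R p a k i j w = 0)"

definition Aset :: "(nat \<Rightarrow> real \<Rightarrow> real) \<Rightarrow> (nat \<Rightarrow> real \<Rightarrow> real) \<Rightarrow> (nat \<Rightarrow> real) \<Rightarrow> (nat \<Rightarrow> real)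
                   \<Rightarrow> nat \<Rightarrow> nat \<Rightarrow> nat \<Rightarrow> (nat \<Rightarrow> nat \<Rightarrow> real) \<Rightarrow> nat set" where
  "Aset R p a k n m i x = {j\<in>{1..m}. xTex n x i j < omega R p a k i j}"

definition feas :: "(nat \<Rightarrow> real \<Rightarrow> real) \<Rightarrow> (nat \<Rightarrow> real \<Rightarrow> real) \<Rightarrow> (nat \<Rightarrow> real) \<Rightarrow> (nat \<Rightarrow> real)
                   \<Rightarrow> nat \<Rightarrow> nat \<Rightarrow> nat \<Rightarrow> (nat \<Rightarrow> nat \<Rightarrow> real) \<Rightarrow> (nat \<Rightarrow> real) set" where
  "feas R p a k n m i x = {z. inC m z \<and>
      (\<forall>j\<in>{1..m}. if j \<in> Aset R p a k n m i x
                     then 0 \<le> z j \<and> z j \<le> omega R p a k i j - xTex n x i j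
                     else z j = 0)}"

definition GNE :: "(nat \<Rightarrow> real \<Rightarrow> real) \<Rightarrow> (nat \<Rightarrow> real \<Rightarrow> real) \<Rightarrow> (nat \<Rightarrow> real) \<Rightarrow> (nat \<Rightarrow> real)
                  \<Rightarrow> nat \<Rightarrow> nat \<Rightarrow> (nat \<Rightarrow> nat \<Rightarrow> real) \<Rightarrow> bool" where
  "GNE R p a k n m x \<longleftrightarrow> inCn n m x \<and>
     (\<forall>i\<in>{1..n}. x i \<in> feas R p a k n m i x \<and>
        (\<forall>z\<in>feas R p a k n m i x. util R p a k n m i x \<ge> util R p a k n m i (x(i := z))))"

definition psi :: "(nat \<Rightarrow> real \<Rightarrow> real) \<Rightarrow> (nat \<Rightarrow> real \<Rightarrow> real) \<Rightarrow> (nat \<Rightarrow> real) \<Rightarrow> (nat \<Rightarrow> real)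
                  \<Rightarrow> nat \<Rightarrow> nat \<Rightarrow> real \<Rightarrow> real \<Rightarrow> real" where
  "psi R p a k i j y s = y * deriv (FF R p a k i j) (y + s) + a i * FF R p a k i j (y + s)"

definition Jset :: "(nat \<Rightarrow> real \<Rightarrow> real) \<Rightarrow> (nat \<Rightarrow> real \<Rightarrow> real) \<Rightarrow> (nat \<Rightarrow> real) \<Rightarrow> (nat \<Rightarrow> real)
                   \<Rightarrow> nat \<Rightarrow> nat \<Rightarrow> nat \<Rightarrow> (nat \<Rightarrow> nat \<Rightarrow> real) \<Rightarrow> nat set" where
  "Jset R p a k n m i x = {j \<in> Aset R p a k n m i x. x i j \<noteq> 0}"

definition typeI :: "(nat \<Rightarrow> real \<Rightarrow> real) \<Rightarrow> (nat \<Rightarrow> real \<Rightarrow> real) \<Rightarrow> (nat \<Rightarrow> real) \<Rightarrow> (nat \<Rightarrow> real)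
                    \<Rightarrow> nat \<Rightarrow> nat \<Rightarrow> nat \<Rightarrow> (nat \<Rightarrow> nat \<Rightarrow> real) \<Rightarrow> bool" where
  "typeI R p a k n m i x \<longleftrightarrow>
     (\<Sum>j\<in>Jset R p a k n m i x. x i j) < 1 \<and>
     (\<forall>j\<in>Jset R p a k n m i x. psi R p a k i j (x i j) (xTex n x i j) = 0)"

definition TI :: "(nat \<Rightarrow> real \<Rightarrow> real) \<Rightarrow> (nat \<Rightarrow> real \<Rightarrow> real) \<Rightarrow> (nat \<Rightarrow> real) \<Rightarrow> (nat \<Rightarrow> real)
                 \<Rightarrow> nat \<Rightarrow> nat \<Rightarrow> (nat \<Rightarrow> nat \<Rightarrow> real) \<Rightarrow> nat set" where
  "TI R p a k n m x = {i\<in>{1..n}. typeI R p a k n m i x}"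

end

theory Submission imports Defs begin

text \<open>In an equilibrium, whoever invests in CPR j keeps the load of j below the zero
  \<omega>_ij < 1 of F_ij, so every CPR carries a total investment below 1. Since m \<le> n, the total
  investment is below n and some player i has budget slack. Each positive investment x_ij of that
  player lies strictly below its cap \<omega>_ij - x_T^{j|i}: at the cap the payoff from CPR j vanishes,
  whereas halving the investment makes it positive. Hence x_ij is an interior local maximum of
  y \<mapsto> y^a_i F_ij(y + x_T^{j|i}), whose derivative is y^(a_i - 1) \<psi>_ij(y; x_T^{j|i}),
  and player i is of Type I.\<close>

lemma decreasing_of_deriv_neg:
  fixes f :: "real \<Rightarrow> real"
  assumes cont: "continuous_on {a..b} f"
    and deriv_neg: "\<forall>t\<in>{a<..<b}. f differentiable (at t) \<and> deriv f t < 0"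
    and "a \<le> u" "u < v" "v \<le> b"
  shows "f v < f u"
proof -
  have "f u > f v"
  proof (rule DERIV_neg_imp_decreasing_open[OF \<open>u < v\<close>])
    fix t assume "u < t" "t < v"
    with assms have "t \<in> {a<..<b}" by auto
    then show "\<exists>y. DERIV f t :> y \<and> y < 0"
      using deriv_neg DERIV_deriv_iff_real_differentiable by blast
  next
    show "continuous_on {u..v} f"
      using cont by (rule continuous_on_subset) (use assms in auto)
  qed
  then show ?thesis by simp
qed

lemma ex1_zero_of_decreasing:
  fixes f :: "real \<Rightarrow> real"
  assumes cont: "continuous_on {0..1} f"
    and deriv_neg: "\<forall>t\<in>{0<..<1}. f differentiable (at t) \<and> deriv f t < 0"
    and "f 0 > 0" "f 1 < 0"
  shows "\<exists>!w. w \<in> {0<..<1} \<and> f w = 0"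
proof -
  obtain w where w: "0 \<le> w" "w \<le> 1" "f w = 0"
    using IVT2'[of f 1 0 0] assms by auto
  with assms have "w \<in> {0<..<1}" by (cases "w = 0"; cases "w = 1") auto
  moreover have "v = w" if "v \<in> {0<..<1}" "f v = 0" for v
    using decreasing_of_deriv_neg[OF cont deriv_neg, of v w]
      decreasing_of_deriv_neg[OF cont deriv_neg, of w v] that w
    by (cases v w rule: linorder_cases) auto
  ultimately show ?thesis using w by blast
qed

lemma powr_mult_local_max_deriv:
  fixes g :: "real \<Rightarrow> real"
  assumes "0 < y" and g: "DERIV g y :> D" and "0 < d"
    and max: "\<forall>z. \<bar>y - z\<bar> < d \<longrightarrow> z powr r * g z \<le> y powr r * g y"
  shows "y * D + r * g y = 0"
proof -
  have "DERIV (\<lambda>z. z powr r * g z) y :> r * y powr (r - 1) * g y + D * y powr r"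
    using DERIV_mult[OF has_real_derivative_powr[OF \<open>0 < y\<close>] g] .
  then have "r * y powr (r - 1) * g y + D * y powr r = 0"
    using DERIV_local_max \<open>0 < d\<close> max by blast
  moreover have "y powr r = y powr (r - 1) * y"
    using \<open>0 < y\<close> by (simp add: powr_diff)
  ultimately have "y powr (r - 1) * (y * D + r * g y) = 0"
    by (simp add: algebra_simps)
  then show ?thesis using \<open>0 < y\<close> by simp
qed

lemma sum_fun_upd_eq:
  fixes G :: "'a \<Rightarrow> 'b \<Rightarrow> 'c::ab_group_add"
  assumes "finite A" "j \<in> A"
  shows "(\<Sum>l\<in>A. G l ((f(j := y)) l)) = (\<Sum>l\<in>A. G l (f l)) - G j (f j) + G j y"
proof -
  have "(\<Sum>l\<in>A-{j}. G l ((f(j := y)) l)) = (\<Sum>l\<in>A-{j}. G l (f l))"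
    by (rule sum.cong) auto
  then show ?thesis using assms by (simp add: sum.remove)
qed

lemma exists_row_sum_less_one:
  fixes x :: "'a \<Rightarrow> 'b \<Rightarrow> real"
  assumes "finite I" "finite J" "J \<noteq> {}" "card J \<le> card I"
    and columns: "\<forall>j\<in>J. (\<Sum>i\<in>I. x i j) < 1"
  shows "\<exists>i\<in>I. (\<Sum>j\<in>J. x i j) < 1"
proof (rule ccontr)
  assume "\<not> ?thesis"
  then have "real (card I) \<le> (\<Sum>i\<in>I. \<Sum>j\<in>J. x i j)"
    using sum_mono[of I "\<lambda>_. 1 :: real" "\<lambda>i. \<Sum>j\<in>J. x i j"] by fastforce
  also have "\<dots> = (\<Sum>j\<in>J. \<Sum>i\<in>I. x i j)"
    by (rule sum.swap)
  also have "\<dots> < real (card J)"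
    using sum_strict_mono[of J "\<lambda>j. \<Sum>i\<in>I. x i j" "\<lambda>_. 1"] assms by simp
  finally show False using assms by simp
qed

lemma xT_eq_add_xTex:
  assumes "i \<in> {1..n}"
  shows "xT n x j = x i j + xTex n x i j"
  unfolding xT_def xTex_def using assms by (simp add: sum.remove)

lemma xTex_fun_upd [simp]: "xTex n (x(i := z)) i j = xTex n x i j"
  unfolding xTex_def by (rule sum.cong) auto

lemma xT_fun_upd:
  assumes "i \<in> {1..n}"
  shows "xT n (x(i := z)) j = z j + xTex n x i j"
  using xT_eq_add_xTex[OF assms, of "x(i := z)"] by simp

lemma util_fun_upd:
  assumes "i \<in> {1..n}"
  shows "util R p a k n m i (x(i := z))
           = (\<Sum>j\<in>{1..m}. z j powr a i * FF R p a k i j (z j + xTex n x i j))"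
  unfolding util_def xT_fun_upd[OF assms] by simp

locale fragile_cpr_game =
  fixes R p :: "nat \<Rightarrow> real \<Rightarrow> real" and a k :: "nat \<Rightarrow> real" and n m :: nat
  assumes R0: "\<And>j. j \<in> {1..m} \<Longrightarrow> R j 0 > 1"
    and p0: "\<And>j. j \<in> {1..m} \<Longrightarrow> p j 0 = 0"
    and p1: "\<And>j. j \<in> {1..m} \<Longrightarrow> p j 1 = 1"
    and k_pos: "\<And>i. i \<in> {1..n} \<Longrightarrow> k i > 0"
    and F_cont: "\<And>i j. i \<in> {1..n} \<Longrightarrow> j \<in> {1..m} \<Longrightarrow> continuous_on {0..1} (FF R p a k i j)"
    and F_deriv_neg: "\<And>i j. i \<in> {1..n} \<Longrightarrow> j \<in> {1..m} \<Longrightarrow>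
      \<forall>t\<in>{0<..<1}. FF R p a k i j differentiable (at t) \<and> deriv (FF R p a k i j) t < 0"
begin

abbreviation "F \<equiv> FF R p a k"
abbreviation "\<omega> \<equiv> omega R p a k"

context
  fixes i j assumes ij: "i \<in> {1..n}" "j \<in> {1..m}"
begin

lemma ex1_zero_FF: "\<exists>!w. w \<in> {0<..<1} \<and> F i j w = 0"
proof (rule ex1_zero_of_decreasing[OF F_cont[OF ij] F_deriv_neg[OF ij]])
  show "F i j 0 > 0" using p0[of j] R0[of j] ij by (simp add: FF_def)
  show "F i j 1 < 0" using p1 k_pos ij by (simp add: FF_def)
qed

lemma omega_mem: "\<omega> i j \<in> {0<..<1}"
  and FF_omega: "F i j (\<omega> i j) = 0"
  using theI'[OF ex1_zero_FF] unfolding omega_def by auto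

lemma FF_pos_below_omega:
  assumes "0 \<le> t" "t < \<omega> i j"
  shows "F i j t > 0"
  using decreasing_of_deriv_neg[OF F_cont[OF ij] F_deriv_neg[OF ij], of t "\<omega> i j"]
    assms omega_mem FF_omega by auto

end

end

locale cpr_equilibrium = fragile_cpr_game +
  fixes x :: "nat \<Rightarrow> nat \<Rightarrow> real"
  assumes equilibrium: "GNE R p a k n m x"
begin

abbreviation "A i \<equiv> Aset R p a k n m i x"
abbreviation "J i \<equiv> Jset R p a k n m i x"
abbreviation "s i j \<equiv> xTex n x i j"

definition cpr_payoff :: "nat \<Rightarrow> nat \<Rightarrow> real \<Rightarrow> real" where
  "cpr_payoff i j y = y powr a i * F i j (y + s i j)"

lemma xTex_nonneg: "j \<in> {1..m} \<Longrightarrow> 0 \<le> s i j"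
  using equilibrium unfolding GNE_def inCn_def inC_def xTex_def by (auto intro!: sum_nonneg)

context
  fixes i assumes i: "i \<in> {1..n}"
begin

lemma strategy_nonneg: "j \<in> {1..m} \<Longrightarrow> 0 \<le> x i j"
  and strategy_le_1: "j \<in> {1..m} \<Longrightarrow> x i j \<le> 1"
  and strategy_sum_le: "sum (x i) {1..m} \<le> 1"
  using equilibrium i unfolding GNE_def inCn_def inC_def by auto

lemma strategy_le_cap: "j \<in> A i \<Longrightarrow> x i j \<le> \<omega> i j - s i j"
  and strategy_eq_0_outside_A: "j \<in> {1..m} \<Longrightarrow> j \<notin> A i \<Longrightarrow> x i j = 0"
  using equilibrium i unfolding GNE_def feas_def Aset_def by auto

lemma sum_Jset_eq: "(\<Sum>j\<in>J i. x i j) = sum (x i) {1..m}"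
proof (rule sum.mono_neutral_left)
  show "\<forall>j\<in>{1..m} - J i. x i j = 0"
    unfolding Jset_def using strategy_eq_0_outside_A by blast
qed (auto simp: Jset_def Aset_def)

lemma cpr_payoff_le:
  assumes j: "j \<in> A i" and y: "0 \<le> y" "y \<le> \<omega> i j - s i j"
    and budget: "sum (x i) {1..m} - x i j + y \<le> 1"
  shows "cpr_payoff i j y \<le> cpr_payoff i j (x i j)"
proof -
  have jm: "j \<in> {1..m}" using j unfolding Aset_def by auto
  have "y \<le> 1" using y xTex_nonneg[where i=i, OF jm] omega_mem[OF i jm] by auto
  moreover have "sum ((x i)(j := y)) {1..m} = sum (x i) {1..m} - x i j + y"
    using sum_fun_upd_eq[of "{1..m}" j "\<lambda>_ v. v"] jm by simp
  ultimately have "(x i)(j := y) \<in> feas R p a k n m i x"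
    unfolding feas_def inC_def
    using strategy_nonneg strategy_le_1 strategy_le_cap strategy_eq_0_outside_A y j budget
    by auto
  then have "util R p a k n m i (x(i := (x i)(j := y))) \<le> util R p a k n m i (x(i := x i))"
    using equilibrium i unfolding GNE_def by auto
  then show ?thesis
    unfolding util_fun_upd[OF i] cpr_payoff_def
    using sum_fun_upd_eq[of "{1..m}" j "\<lambda>l v. v powr a i * F i l (v + s i l)" "x i" y] jm
    by simp
qed

lemma strategy_less_cap:
  assumes j: "j \<in> J i"
  shows "x i j < \<omega> i j - s i j"
proof (rule ccontr)
  assume not_less: "\<not> x i j < \<omega> i j - s i j"
  have jA: "j \<in> A i" and jm: "j \<in> {1..m}" and pos: "x i j > 0"
    using j strategy_nonneg unfolding Jset_def Aset_def by force+
  then have cap: "x i j = \<omega> i j - s i j"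
    using not_less strategy_le_cap by fastforce
  have "x i j / 2 + s i j < \<omega> i j" using pos cap by linarith
  then have "F i j (x i j / 2 + s i j) > 0"
    using FF_pos_below_omega[OF i jm] xTex_nonneg[where i=i, OF jm] pos by simp
  then have "cpr_payoff i j (x i j / 2) > cpr_payoff i j (x i j)"
    unfolding cpr_payoff_def using pos cap FF_omega[OF i jm] by simp
  moreover have "cpr_payoff i j (x i j / 2) \<le> cpr_payoff i j (x i j)"
    using cpr_payoff_le[OF jA] pos cap strategy_sum_le by simp
  ultimately show False by simp
qed

lemma psi_eq_0_if_budget_slack:
  assumes slack: "sum (x i) {1..m} < 1" and j: "j \<in> J i"
  shows "psi R p a k i j (x i j) (s i j) = 0"
proof -
  have jA: "j \<in> A i" and jm: "j \<in> {1..m}" and pos: "x i j > 0"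
    using j strategy_nonneg unfolding Jset_def Aset_def by force+
  define d where "d = min (x i j) (min (\<omega> i j - s i j - x i j) (1 - sum (x i) {1..m}))"
  have "d > 0" unfolding d_def using pos strategy_less_cap[OF j] slack by auto
  have local_max: "\<forall>y. \<bar>x i j - y\<bar> < d \<longrightarrow> cpr_payoff i j y \<le> cpr_payoff i j (x i j)"
    using cpr_payoff_le[OF jA] unfolding d_def by auto
  have "x i j + s i j \<in> {0<..<1}"
    using pos xTex_nonneg[where i=i, OF jm] strategy_less_cap[OF j] omega_mem[OF i jm] by auto
  then have "DERIV (F i j) (x i j + s i j) :> deriv (F i j) (x i j + s i j)"
    using F_deriv_neg[OF i jm] DERIV_deriv_iff_real_differentiable by blast
  then have "DERIV (\<lambda>y. F i j (y + s i j)) (x i j) :> deriv (F i j) (x i j + s i j)"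
    by (simp add: DERIV_shift)
  from powr_mult_local_max_deriv[OF pos this \<open>d > 0\<close>] local_max
  show ?thesis unfolding psi_def cpr_payoff_def by simp
qed

lemma typeI_if_budget_slack: "sum (x i) {1..m} < 1 \<Longrightarrow> typeI R p a k n m i x"
  unfolding typeI_def using sum_Jset_eq psi_eq_0_if_budget_slack by simp

end

lemma xT_less_one:
  assumes j: "j \<in> {1..m}"
  shows "xT n x j < 1"
proof (cases "\<exists>i\<in>{1..n}. x i j \<noteq> 0")
  case True
  then obtain i where i: "i \<in> {1..n}" and "x i j \<noteq> 0" by auto
  then have "x i j \<le> \<omega> i j - s i j"
    using strategy_le_cap[OF i] strategy_eq_0_outside_A[OF i j] by blast
  then show ?thesis using xT_eq_add_xTex[OF i] omega_mem[OF i j] by auto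
qed (simp add: xT_def)

end

theorem lemma7:
  fixes R p :: "nat \<Rightarrow> real \<Rightarrow> real" and a k :: "nat \<Rightarrow> real" and n m :: nat
    and x :: "nat \<Rightarrow> nat \<Rightarrow> real"
  assumes n: "n \<ge> 1" and m: "m \<ge> 1" and mn: "m \<le> n"
    and R: "\<forall>j\<in>{1..m}. \<forall>t\<ge>0. R j t > 1"
    and p_range: "\<forall>j\<in>{1..m}. \<forall>t\<ge>0. 0 \<le> p j t \<and> p j t \<le> 1"
    and p0: "\<forall>j\<in>{1..m}. p j 0 = 0"
    and p1: "\<forall>j\<in>{1..m}. \<forall>t\<ge>1. p j t = 1"
    and a: "\<forall>i\<in>{1..n}. 0 < a i \<and> a i \<le> 1"
    and k: "\<forall>i\<in>{1..n}. k i > 0"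
    and Fcont: "\<forall>i\<in>{1..n}. \<forall>j\<in>{1..m}. continuous_on {0..1} (FF R p a k i j)"
    and Fd1: "\<forall>i\<in>{1..n}. \<forall>j\<in>{1..m}. \<forall>t\<in>{0<..<1}.
               FF R p a k i j differentiable (at t) \<and> deriv (FF R p a k i j) t < 0"
    and Fd2: "\<forall>i\<in>{1..n}. \<forall>j\<in>{1..m}. \<forall>t\<in>{0<..<1}.
               deriv (FF R p a k i j) differentiable (at t) \<and> deriv (deriv (FF R p a k i j)) t < 0"
    and eq: "GNE R p a k n m x"
  shows "TI R p a k n m x \<noteq> {}"
proof -
  interpret cpr_equilibrium R p a k n m x
    by unfold_locales (use R p0 p1 k Fcont Fd1 eq in auto)
  have "\<forall>j\<in>{1..m}. (\<Sum>i\<in>{1..n}. x i j) < 1"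
    using xT_less_one unfolding xT_def by blast
  then obtain i where "i \<in> {1..n}" "sum (x i) {1..m} < 1"
    using exists_row_sum_less_one[of "{1..n}" "{1..m}" x] m mn by auto
  then show ?thesis unfolding TI_def using typeI_if_budget_slack by auto
qed

end
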